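(* Consider $\dot{x} = f(x) + g(x)u$, $x\in\mathcal{X}\subseteq\mathbb{R}^n$, $u\in\mathcal{U}\subseteq\mathbb{R}^m$, with $f,g$ continuously differentiable and $\mathcal{U}$ a convex polytope; let $h$ be continuously differentiable, $\mathcal{C}_S=\{x:h(x)\ge0\}$, and let $k_b$ be a backup controller with backup set $\mathcal{C}_B=\{x:h_b(x)\ge0\}\subseteq\mathcal{C}_S$ (see context). Let $k_e(x,\theta)$, $\theta\in\mathbb{R}^p$, be a parameterized expanding controller with values in $\mathcal{U}$, and let $\eta:\mathcal{X}\to[0,1]$ be continuously differentiable with $\eta(x)=1$ for all $x\in\mathcal{C}_B$. Consider the augmented state $\hat x = (x,\theta)\in\hat{\mathcal{X}} = \mathcal{X}\times\mathbb{R}^p$ and augmented dynamics $$\dot{\hat x} = \hat f(\hat x)+\hat g(\hat x)\hat u,\quad \hat f(\hat x) = \begin{bmatrix} f(x)\\ 0_{p\times1}\end{bmatrix},\ \hat g(\hat x) = \begin{bmatrix} g(x) & 0_{n\times p}\\ 0_{p\times m} & I_p\end{bmatrix},$$ with $\hat u = (u,u_\theta)\in\hat{\mathcal{U}}=\mathcal{U}\times\mathbb{R}^p$. Define $\hat k_s(\hat x) = \big((1-\eta(x))k_e(x,\theta)+\eta(x)k_b(x),\ 0_{p\times1}\big)$ and $\hat{\mathcal{C}}_B = \{\hat x\in\hat{\mathcal{X}}: h_b(x)\ge 0\}$. Then $\hat k_s$ renders $\hat{\mathcal{C}}_B$ forward invariant along the augmented system $\dot{\hat x} = \hat f(\hat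 x)+\hat g(\hat x)\hat k_s(\hat x)$.
   Context: A set is forward invariant along a closed-loop system if solutions starting in it remain in it for all $t\ge0$. A backup controller is a continuously differentiable $k_b:\mathcal{X}\to\mathcal{U}$ rendering $\mathcal{C}_B=\{x\in\mathcal{X}: h_b(x)\ge0\}\subseteq\mathcal{C}_S$ forward invariant for $\dot x=f(x)+g(x)k_b(x)$, where $h_b$ is continuously differentiable with $\nabla h_b(x)\neq0$ on $\partial\mathcal{C}_B$. *)

theory Defs
  imports "HOL-Analysis.Analysis"
begin

definition C1_on :: "'a::real_normed_vector set \<Rightarrow> ('a \<Rightarrow> 'b::real_normed_vector) \<Rightarrow> bool" where
  "C1_on S f \<longleftrightarrow> (\<exists>f'. (\<forall>x\<in>S. (f has_derivative blinfun_apply (f' x)) (at x)) \<and> continuous_on S f')"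

text \<open>Since T \<ge> 0 is arbitrary, this covers all t \<ge> 0 for which a solution exists.\<close>
definition forward_invariant :: "'a::real_normed_vector set \<Rightarrow> ('a \<Rightarrow> 'a) \<Rightarrow> 'a set \<Rightarrow> bool" where
  "forward_invariant D F S \<longleftrightarrow>
     (\<forall>\<phi> T. 0 \<le> T \<and> \<phi> 0 \<in> S \<and>
        (\<forall>t\<in>{0..T}. \<phi> t \<in> D \<and> (\<phi> has_vector_derivative F (\<phi> t)) (at t within {0..T}))
        \<longrightarrow> (\<forall>t\<in>{0..T}. \<phi> t \<in> S))"

end

theory Submission
  imports Defs
begin

(*
  Along a solution of the augmented system the parameter has zero dynamics, so it is frozen
  at some value theta, and the state solves xdot = F(x) with
  F = f + g ((1 - eta) ke(., theta) + eta kb).  Since eta = 1 on the backup set C_B, F agrees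
  there with the backup field Fb = f + g kb; both fields are locally Lipschitz.  Suppose x
  leaves C_B and let s be the infimum of the times outside C_B.  The solution of Fb from x(s)
  exists for a short time (Picard) and stays in C_B because C_B is Fb-invariant, so it also
  solves xdot = F(x); by uniqueness it coincides with x right after s, a contradiction.
*)

text \<open>Local Lipschitz continuity, in a form that is directly stable under sums, bilinear
  products and composition; on open subsets of a Euclidean space it is the usual notion.\<close>
definition lipschitz_on_compacts :: "'a::metric_space set \<Rightarrow> ('a \<Rightarrow> 'b::metric_space) \<Rightarrow> bool" where
  "lipschitz_on_compacts S F \<longleftrightarrow> (\<forall>K. compact K \<and> K \<subseteq> S \<longrightarrow> (\<exists>L. L-lipschitz_on K F))"

lemma lipschitz_on_compactsD:
  assumes "lipschitz_on_compacts S F" "compact K" "K \<subseteq> S"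
  obtains L where "L-lipschitz_on K F"
  using assms unfolding lipschitz_on_compacts_def by blast

lemma lipschitz_on_compacts_const: "lipschitz_on_compacts S (\<lambda>x. c)"
  unfolding lipschitz_on_compacts_def by (auto intro: lipschitz_on_constant)

lemma lipschitz_on_compacts_add:
  fixes F G :: "'a::metric_space \<Rightarrow> 'b::real_normed_vector"
  assumes "lipschitz_on_compacts S F" "lipschitz_on_compacts S G"
  shows "lipschitz_on_compacts S (\<lambda>x. F x + G x)"
  unfolding lipschitz_on_compacts_def
proof clarify
  fix K assume "compact K" "K \<subseteq> S"
  then obtain L M where "L-lipschitz_on K F" "M-lipschitz_on K G"
    using assms by (meson lipschitz_on_compactsD)
  then show "\<exists>N. N-lipschitz_on K (\<lambda>x. F x + G x)" by (blast intro: lipschitz_on_add)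
qed

lemma lipschitz_on_compacts_diff:
  fixes F G :: "'a::metric_space \<Rightarrow> 'b::real_normed_vector"
  assumes "lipschitz_on_compacts S F" "lipschitz_on_compacts S G"
  shows "lipschitz_on_compacts S (\<lambda>x. F x - G x)"
  unfolding lipschitz_on_compacts_def
proof clarify
  fix K assume "compact K" "K \<subseteq> S"
  then obtain L M where "L-lipschitz_on K F" "M-lipschitz_on K G"
    using assms by (meson lipschitz_on_compactsD)
  then show "\<exists>N. N-lipschitz_on K (\<lambda>x. F x - G x)" by (blast intro: lipschitz_on_diff)
qed

lemma lipschitz_on_compacts_compose:
  assumes F: "lipschitz_on_compacts T F" and G: "lipschitz_on_compacts S G" and "G ` S \<subseteq> T"
  shows "lipschitz_on_compacts S (\<lambda>x. F (G x))"
  unfolding lipschitz_on_compacts_def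
proof clarify
  fix K assume K: "compact K" "K \<subseteq> S"
  obtain M where M: "M-lipschitz_on K G" using G K by (rule lipschitz_on_compactsD)
  have "compact (G ` K)"
    using lipschitz_on_continuous_on[OF M] K(1) by (rule compact_continuous_image)
  moreover have "G ` K \<subseteq> T" using K(2) assms(3) by blast
  ultimately obtain L where "L-lipschitz_on (G ` K) F" using F by (metis lipschitz_on_compactsD)
  then show "\<exists>N. N-lipschitz_on K (\<lambda>x. F (G x))" using lipschitz_on_compose2[OF M] by blast
qed

lemma lipschitz_on_compacts_Pair_const:
  "lipschitz_on_compacts S (\<lambda>x. (x, c))"
proof -
  have "(sqrt (1\<^sup>2 + 0\<^sup>2))-lipschitz_on K (\<lambda>x. (x, c))" for K :: "'a::metric_space set"
    by (intro lipschitz_on_Pair lipschitz_on_id lipschitz_on_constant)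
  then show ?thesis unfolding lipschitz_on_compacts_def by blast
qed

lemma (in bounded_bilinear) lipschitz_on_prod:
  assumes f: "L-lipschitz_on U f" and g: "M-lipschitz_on U g"
    and "bounded (f ` U)" "bounded (g ` U)"
  shows "\<exists>N. N-lipschitz_on U (\<lambda>x. prod (f x) (g x))"
proof -
  obtain A B where A: "\<forall>x\<in>U. norm (f x) \<le> A" and B: "\<forall>x\<in>U. norm (g x) \<le> B" and "A > 0" "B > 0"
    using assms(3,4) by (auto simp: bounded_pos)
  obtain K where K: "K > 0" "\<And>a b. norm (prod a b) \<le> norm a * norm b * K"
    using pos_bounded by blast
  have "dist (prod (f x) (g x)) (prod (f y) (g y)) \<le> K * (L * B + A * M) * dist x y"
    if "x \<in> U" "y \<in> U" for x y
  proof -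
    have "dist (prod (f x) (g x)) (prod (f y) (g y))
        = norm (prod (f x - f y) (g x) + prod (f y) (g x - g y))"
      by (simp add: dist_norm diff_left diff_right)
    also have "\<dots> \<le> norm (f x - f y) * norm (g x) * K + norm (f y) * norm (g x - g y) * K"
      by (intro norm_triangle_le add_mono K(2))
    also have "\<dots> \<le> (L * dist x y) * B * K + A * (M * dist x y) * K"
      using lipschitz_onD[OF f that] lipschitz_onD[OF g that] A B that K(1)
        lipschitz_on_nonneg[OF f] lipschitz_on_nonneg[OF g] \<open>A > 0\<close>
      by (intro add_mono mult_right_mono mult_mono)
        (auto simp: dist_norm[of "f _"] dist_norm[of "g _"])
    finally show ?thesis by (simp add: algebra_simps)
  qed
  moreover have "0 \<le> K * (L * B + A * M)"
    using K(1) \<open>A > 0\<close> \<open>B > 0\<close> lipschitz_on_nonneg[OF f] lipschitz_on_nonneg[OF g] by simp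
  ultimately show ?thesis by (blast intro: lipschitz_onI)
qed

lemma lipschitz_on_compacts_bilinear:
  assumes b: "bounded_bilinear b"
    and F: "lipschitz_on_compacts S F" and G: "lipschitz_on_compacts S G"
  shows "lipschitz_on_compacts S (\<lambda>x. b (F x) (G x))"
  unfolding lipschitz_on_compacts_def
proof clarify
  fix K assume K: "compact K" "K \<subseteq> S"
  obtain L where L: "L-lipschitz_on K F" using F K by (rule lipschitz_on_compactsD)
  obtain M where M: "M-lipschitz_on K G" using G K by (rule lipschitz_on_compactsD)
  have "bounded (F ` K)" "bounded (G ` K)"
    using K(1) L M
    by (meson compact_continuous_image compact_imp_bounded lipschitz_on_continuous_on)+
  then show "\<exists>N. N-lipschitz_on K (\<lambda>x. b (F x) (G x))"
    by (rule bounded_bilinear.lipschitz_on_prod[OF b L M])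
qed

lemma bounded_bilinear_matrix_vector_mult:
  "bounded_bilinear (\<lambda>(A::real^'m^'n) (v::real^'m). A *v v)"
proof -
  have "bilinear (\<lambda>(A::real^'m^'n) (v::real^'m). A *v v)"
    unfolding bilinear_def by (auto intro!: linearI simp: algebra_simps scaleR_matrix_vector_assoc)
  then show ?thesis by (simp add: bilinear_conv_bounded_bilinear)
qed

lemma C1_on_imp_continuous_on: "C1_on S F \<Longrightarrow> continuous_on S F"
  unfolding C1_on_def by (metis continuous_at_imp_continuous_on has_derivative_continuous)

lemma C1_on_imp_lipschitz_on_compacts:
  fixes F :: "'a::euclidean_space \<Rightarrow> 'b::real_normed_vector"
  assumes S: "open S" and "C1_on S F"
  shows "lipschitz_on_compacts S F"
proof -
  obtain F' where F': "\<forall>x\<in>S. (F has_derivative blinfun_apply (F' x)) (at x)"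
    and "continuous_on S F'"
    using assms(2) unfolding C1_on_def by blast
  \<comment> \<open>The library's \<open>local_lipschitz\<close> is about time-dependent fields; \<open>F\<close> is constant in time.\<close>
  have "local_lipschitz (UNIV :: real set) S (\<lambda>_. F)"
  proof (rule local_lipschitzI)
    fix t :: real and x assume "x \<in> S"
    then obtain u where u: "u > 0" "cball x u \<subseteq> S" using S open_contains_cball by blast
    then have "compact (F' ` cball x u)"
      by (intro compact_continuous_image continuous_on_subset[OF \<open>continuous_on S F'\<close>]) auto
    then obtain B where B: "B > 0" "\<forall>y\<in>cball x u. norm (F' y) \<le> B"
      by (auto dest!: compact_imp_bounded simp: bounded_pos)
    have "B-lipschitz_on (cball x u) F"
      using F' u B by (intro bounded_derivative_imp_lipschitz[of _ _ "\<lambda>y. blinfun_apply (F' y)"])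
        (auto intro: has_derivative_at_withinI simp: subset_iff norm_blinfun.rep_eq[symmetric])
    then show "\<exists>u>0. \<exists>L. \<forall>t\<in>cball t u \<inter> UNIV. L-lipschitz_on (cball x u \<inter> S) F"
      using u by (blast intro: lipschitz_on_subset)
  qed
  then show ?thesis
    unfolding lipschitz_on_compacts_def
  proof clarify
    fix K assume K: "compact K" "K \<subseteq> S"
    have "local_lipschitz {0::real} K (\<lambda>_. F)"
      using local_lipschitz_subset[OF \<open>local_lipschitz UNIV S (\<lambda>_. F)\<close>] K(2) by blast
    then obtain L where "L-lipschitz_on K F"
      using local_lipschitz_compact_implies_lipschitz[of "{0::real}" K "\<lambda>_. F"] K(1) by auto
    then show "\<exists>L. L-lipschitz_on K F" ..
  qed
qed

definition integral_curve_on ::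
    "('a::real_normed_vector \<Rightarrow> 'a) \<Rightarrow> real set \<Rightarrow> (real \<Rightarrow> 'a) \<Rightarrow> bool" where
  "integral_curve_on F I x \<longleftrightarrow> (\<forall>t\<in>I. (x has_vector_derivative F (x t)) (at t within I))"

lemma integral_curve_on_subset:
  "integral_curve_on F I x \<Longrightarrow> J \<subseteq> I \<Longrightarrow> integral_curve_on F J x"
  unfolding integral_curve_on_def by (meson has_vector_derivative_within_subset subsetD)

lemma integral_curve_on_cong:
  "integral_curve_on F I x \<Longrightarrow> (\<And>t. t \<in> I \<Longrightarrow> F (x t) = G (x t)) \<Longrightarrow> integral_curve_on G I x"
  by (simp add: integral_curve_on_def)

lemma integral_curve_on_continuous_on:
  "integral_curve_on F I x \<Longrightarrow> continuous_on I x"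
  unfolding integral_curve_on_def by (rule continuous_on_vector_derivative) blast

lemma integral_curve_on_shift:
  assumes "integral_curve_on F {a..b} x"
  shows "integral_curve_on F {0..b - a} (\<lambda>t. x (a + t))"
  unfolding integral_curve_on_def
proof
  fix t assume t: "t \<in> {0..b - a}"
  have "((\<lambda>t. a + t) has_vector_derivative 1) (at t within {0..b - a})"
    by (auto intro!: derivative_eq_intros)
  moreover have
    "(x has_vector_derivative F (x (a + t))) (at (a + t) within (\<lambda>t. a + t) ` {0..b - a})"
    using assms t by (simp add: integral_curve_on_def)
  ultimately show "((\<lambda>t. x (a + t)) has_vector_derivative F (x (a + t))) (at t within {0..b - a})"
    using vector_diff_chain_within by (fastforce simp: o_def)
qed

lemma forward_invariantD:
  assumes "forward_invariant D F S" "0 \<le> T" "x 0 \<in> S"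
    and "x ` {0..T} \<subseteq> D" "integral_curve_on F {0..T} x"
  shows "x ` {0..T} \<subseteq> S"
  using assms unfolding forward_invariant_def integral_curve_on_def by blast

lemma bounded_vector_derivative_imp_lipschitz:
  assumes "\<forall>t\<in>{a..b}. (f has_vector_derivative f' t) (at t within {a..b})"
    and "\<forall>t\<in>{a..b}. norm (f' t) \<le> B" "0 \<le> B"
  shows "B-lipschitz_on {a..b} f"
proof (rule bounded_derivative_imp_lipschitz[of _ _ "\<lambda>t h. h *\<^sub>R f' t"])
  fix t assume "t \<in> {a..b}"
  then show "(f has_derivative (\<lambda>h. h *\<^sub>R f' t)) (at t within {a..b})"
    using assms(1) by (simp add: has_vector_derivative_def)
  show "onorm (\<lambda>h. h *\<^sub>R f' t) \<le> B"
    using assms(2) \<open>t \<in> {a..b}\<close> by (simp add: onorm_scaleR_left[OF bounded_linear_ident] onorm_id)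
qed (use assms in auto)

lemma integral_curves_unique_short_time:
  fixes F :: "'a::real_normed_vector \<Rightarrow> 'a"
  assumes F: "L-lipschitz_on K F" and short: "L * (b - a) < 1"
    and x: "integral_curve_on F {a..b} x" "x ` {a..b} \<subseteq> K"
    and y: "integral_curve_on F {a..b} y" "y ` {a..b} \<subseteq> K"
    and "x a = y a" and t: "t \<in> {a..b}"
  shows "x t = y t"
proof -
  define e where "e t = x t - y t" for t
  have e': "\<forall>t\<in>{a..b}. (e has_vector_derivative F (x t) - F (y t)) (at t within {a..b})"
    using x(1) y(1) unfolding e_def integral_curve_on_def
    by (auto intro: has_vector_derivative_diff)
  have e_cont: "continuous_on {a..b} (\<lambda>t. norm (e t))"
    using e' by (intro continuous_on_norm continuous_on_vector_derivative) blast
  obtain m where m: "m \<in> {a..b}" "\<forall>t\<in>{a..b}. norm (e t) \<le> norm (e m)"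
    using continuous_attains_sup[OF compact_Icc _ e_cont] t by blast
  have "norm (F (x t) - F (y t)) \<le> L * norm (e m)" if "t \<in> {a..b}" for t
  proof -
    have "norm (F (x t) - F (y t)) \<le> L * norm (e t)"
      using lipschitz_on_normD[OF F] x(2) y(2) that unfolding e_def by blast
    also have "\<dots> \<le> L * norm (e m)"
      using m(2) that lipschitz_on_nonneg[OF F] by (simp add: mult_left_mono)
    finally show ?thesis .
  qed
  then have "(L * norm (e m))-lipschitz_on {a..b} e"
    using e' lipschitz_on_nonneg[OF F] by (intro bounded_vector_derivative_imp_lipschitz) auto
  then have "norm (e m - e a) \<le> L * norm (e m) * norm (m - a)"
    using m(1) t by (intro lipschitz_on_normD) auto
  also have "\<dots> \<le> L * norm (e m) * (b - a)"
    using m(1) lipschitz_on_nonneg[OF F] by (intro mult_left_mono) auto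
  finally have "norm (e m - e a) \<le> L * norm (e m) * (b - a)" .
  then have "norm (e m) * (1 - L * (b - a)) \<le> 0"
    using \<open>x a = y a\<close> by (simp add: e_def algebra_simps)
  then have "norm (e m) = 0"
    using short by (simp add: mult_le_0_iff)
  then show ?thesis using m(2) t by (auto simp: e_def)
qed

lemma integral_curves_locally_unique:
  fixes F :: "'a::real_normed_vector \<Rightarrow> 'a"
  assumes F: "lipschitz_on_compacts X F" and "0 < a"
    and x: "integral_curve_on F {0..a} x" "x ` {0..a} \<subseteq> X"
    and y: "integral_curve_on F {0..a} y" "y ` {0..a} \<subseteq> X"
    and "x 0 = y 0"
  obtains h where "0 < h" "h \<le> a" "\<And>t. t \<in> {0..h} \<Longrightarrow> x t = y t"
proof -
  define K where "K = x ` {0..a} \<union> y ` {0..a}"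
  have "compact K" unfolding K_def
    by (intro compact_Un compact_continuous_image compact_Icc
        integral_curve_on_continuous_on[OF x(1)] integral_curve_on_continuous_on[OF y(1)])
  moreover have "K \<subseteq> X" using x(2) y(2) by (auto simp: K_def)
  ultimately obtain L where L: "L-lipschitz_on K F" using F by (metis lipschitz_on_compactsD)
  define h where "h = min a (1 / (2 * L + 2))"
  have h: "0 < h" "h \<le> a" "L * (h - 0) < 1"
  proof -
    have "L * h \<le> L * (1 / (2 * L + 2))"
      using lipschitz_on_nonneg[OF L] by (intro mult_left_mono) (auto simp: h_def)
    also have "\<dots> < 1" using lipschitz_on_nonneg[OF L] by (simp add: field_simps)
    finally show "L * (h - 0) < 1" by simp
  qed (use \<open>0 < a\<close> lipschitz_on_nonneg[OF L] in \<open>auto simp: h_def\<close>)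
  then have "{0..h} \<subseteq> {0..a}" by auto
  then have "x ` {0..h} \<subseteq> K" "y ` {0..h} \<subseteq> K" by (auto simp: K_def)
  then have "x t = y t" if "t \<in> {0..h}" for t
    using integral_curves_unique_short_time[OF L h(3) integral_curve_on_subset[OF x(1)] _
        integral_curve_on_subset[OF y(1)] _ \<open>x 0 = y 0\<close> that] \<open>{0..h} \<subseteq> {0..a}\<close> by blast
  then show ?thesis using h that by blast
qed

text \<open>The Picard operator, with time clamped to \<open>[0, \<delta>]\<close> so that its values are bounded
  continuous functions on all of \<open>\<real>\<close>.\<close>
definition picard_step :: "('a::banach \<Rightarrow> 'a) \<Rightarrow> 'a \<Rightarrow> real \<Rightarrow> (real \<Rightarrow> 'a) \<Rightarrow> real \<Rightarrow> 'a" where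
  "picard_step F q \<delta> y t = q + integral {0..max 0 (min \<delta> t)} (\<lambda>s. F (y s))"

context
  fixes F :: "'a::banach \<Rightarrow> 'a" and q :: 'a and r \<delta> :: real
  assumes F_cont: "continuous_on (cball q r) F" and \<delta>: "0 \<le> \<delta>"
begin

lemma continuous_on_picard_integrand:
  "continuous_on UNIV y \<Longrightarrow> range y \<subseteq> cball q r \<Longrightarrow> continuous_on S (\<lambda>s. F (y s))"
  by (rule continuous_on_compose2[OF F_cont]) (auto intro: continuous_on_subset)

lemma picard_step_maps_into_cball:
  assumes M: "0 \<le> M" "\<forall>z\<in>cball q r. norm (F z) \<le> M" "M * \<delta> \<le> r"
    and y: "continuous_on UNIV y" "range y \<subseteq> cball q r"
  shows "continuous_on UNIV (picard_step F q \<delta> y)" "range (picard_step F q \<delta> y) \<subseteq> cball q r"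
proof -
  have "continuous_on {0..\<delta>} (\<lambda>u. integral {0..u} (\<lambda>s. F (y s)))"
    by (intro indefinite_integral_continuous_1 integrable_continuous_real
        continuous_on_picard_integrand y)
  then have "continuous_on UNIV (\<lambda>t. integral {0..max 0 (min \<delta> t)} (\<lambda>s. F (y s)))"
    by (rule continuous_on_compose2) (auto intro!: continuous_intros simp: \<delta>)
  then show "continuous_on UNIV (picard_step F q \<delta> y)"
    unfolding picard_step_def[abs_def] by (intro continuous_intros)
  have "dist q (picard_step F q \<delta> y t) \<le> r" for t
  proof -
    have "dist q (picard_step F q \<delta> y t) = norm (integral {0..max 0 (min \<delta> t)} (\<lambda>s. F (y s)))"
      by (simp add: picard_step_def dist_norm)
    also have "\<dots> \<le> M * (max 0 (min \<delta> t) - 0)"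
      using M(2) y(2) by (intro integral_bound continuous_on_picard_integrand y) auto
    also have "\<dots> \<le> M * \<delta>"
      using M(1) \<delta> by (intro mult_left_mono) auto
    also have "\<dots> \<le> r" by (rule M(3))
    finally show ?thesis .
  qed
  then show "range (picard_step F q \<delta> y) \<subseteq> cball q r" by auto
qed

lemma picard_step_contraction:
  assumes F: "L-lipschitz_on (cball q r) F"
    and y: "continuous_on UNIV y" "range y \<subseteq> cball q r"
    and z: "continuous_on UNIV z" "range z \<subseteq> cball q r"
    and d: "\<forall>s. dist (y s) (z s) \<le> d"
  shows "dist (picard_step F q \<delta> y t) (picard_step F q \<delta> z t) \<le> L * \<delta> * d"
proof -
  let ?c = "max 0 (min \<delta> t)"
  have "dist (picard_step F q \<delta> y t) (picard_step F q \<delta> z t)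
      = norm (integral {0..?c} (\<lambda>s. F (y s) - F (z s)))"
    by (simp add: picard_step_def dist_norm integral_diff integrable_continuous_real
        continuous_on_picard_integrand y z)
  also have "\<dots> \<le> (L * d) * (?c - 0)"
  proof (rule integral_bound)
    show "continuous_on {0..?c} (\<lambda>s. F (y s) - F (z s))"
      by (intro continuous_intros continuous_on_picard_integrand y z)
    fix s
    have "norm (F (y s) - F (z s)) \<le> L * norm (y s - z s)"
      by (intro lipschitz_on_normD[OF F] subsetD[OF y(2)] subsetD[OF z(2)] rangeI)
    also have "\<dots> \<le> L * d"
      using d lipschitz_on_nonneg[OF F] by (simp add: dist_norm mult_left_mono)
    finally show "norm (F (y s) - F (z s)) \<le> L * d" .
  qed simp
  also have "\<dots> \<le> (L * d) * \<delta>"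
  proof (intro mult_left_mono)
    have "0 \<le> d" using order_trans[OF zero_le_dist d[rule_format, of 0]] .
    then show "0 \<le> L * d" using lipschitz_on_nonneg[OF F] by simp
  qed (use \<delta> in auto)
  finally show ?thesis by (simp add: ac_simps)
qed

lemma picard_step_fixpoint_is_integral_curve:
  assumes y: "continuous_on UNIV y" "range y \<subseteq> cball q r" and fixpoint: "picard_step F q \<delta> y = y"
  shows "y 0 = q" "integral_curve_on F {0..\<delta>} y"
proof -
  have y_eq: "y t = q + integral {0..t} (\<lambda>s. F (y s))" if "t \<in> {0..\<delta>}" for t
    using that fun_cong[OF fixpoint, of t] by (simp add: picard_step_def)
  then show "y 0 = q" using \<delta> by simp
  show "integral_curve_on F {0..\<delta>} y"
    unfolding integral_curve_on_def
  proof
    fix t assume t: "t \<in> {0..\<delta>}"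
    have "((\<lambda>u. q + integral {0..u} (\<lambda>s. F (y s))) has_vector_derivative F (y t))
        (at t within {0..\<delta>})"
      using integral_has_vector_derivative[OF continuous_on_picard_integrand[OF y] t]
      by (intro derivative_eq_intros) auto
    then show "(y has_vector_derivative F (y t)) (at t within {0..\<delta>})"
      by (rule has_vector_derivative_transform[OF t, rotated]) (rule y_eq)
  qed
qed

lemma picard_fixpoint_exists:
  assumes F: "L-lipschitz_on (cball q r) F"
    and M: "0 \<le> M" "\<And>z. z \<in> cball q r \<Longrightarrow> norm (F z) \<le> M" "M * \<delta> \<le> r"
    and contraction: "L * \<delta> \<le> 1 / 2" and "0 \<le> r"
  shows "\<exists>y. continuous_on UNIV y \<and> range y \<subseteq> cball q r \<and> picard_step F q \<delta> y = y"
proof -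
  define S :: "(real \<Rightarrow>\<^sub>C 'a) set" where "S = PiC UNIV (\<lambda>_. cball q r)"
  have S_iff: "y \<in> S \<longleftrightarrow> range (apply_bcontfun y) \<subseteq> cball q r" for y
    by (auto simp: S_def mem_PiC_iff)
  define P where "P y = Bcontfun (picard_step F q \<delta> (apply_bcontfun y))" for y
  have P: "apply_bcontfun (P y) = picard_step F q \<delta> (apply_bcontfun y)" "P y \<in> S" if "y \<in> S" for y
  proof -
    note step =
      picard_step_maps_into_cball[OF M(1) ballI[OF M(2)] M(3) continuous_on_apply_bcontfun]
    have range_step: "range (picard_step F q \<delta> (apply_bcontfun y)) \<subseteq> cball q r"
      using step(2) that by (simp add: S_iff)
    have "norm (picard_step F q \<delta> (apply_bcontfun y) t) \<le> norm q + r" for t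
    proof -
      have "dist (picard_step F q \<delta> (apply_bcontfun y) t) q \<le> r"
        using subsetD[OF range_step rangeI] by (simp add: dist_commute)
      then show ?thesis
        using norm_triangle_ineq2[of "picard_step F q \<delta> (apply_bcontfun y) t" q]
        unfolding dist_norm by linarith
    qed
    then have "picard_step F q \<delta> (apply_bcontfun y) \<in> bcontfun"
      using step(1) that by (intro bcontfun_normI) (auto simp: S_iff)
    then show "apply_bcontfun (P y) = picard_step F q \<delta> (apply_bcontfun y)"
      by (simp add: P_def Bcontfun_inverse)
    then show "P y \<in> S" using range_step by (simp add: S_iff)
  qed
  have "dist (P y) (P z) \<le> 1 / 2 * dist y z" if "y \<in> S" "z \<in> S" for y z
  proof (rule dist_bound)
    fix t
    have "dist (P y t) (P z t) \<le> L * \<delta> * dist y z"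
      unfolding P(1)[OF that(1)] P(1)[OF that(2)] using that dist_bounded
      by (intro picard_step_contraction F) (auto simp: S_iff)
    also have "\<dots> \<le> 1 / 2 * dist y z" using contraction by (intro mult_right_mono) auto
    finally show "dist (P y t) (P z t) \<le> 1 / 2 * dist y z" .
  qed
  moreover have "complete S" unfolding S_def complete_eq_closed by (rule closed_PiC) simp
  moreover have "const_bcontfun q \<in> S" using \<open>0 \<le> r\<close> by (auto simp: S_iff)
  ultimately have "\<exists>!y\<in>S. P y = y"
    by (intro Banach_fix[of S "1 / 2" P]) (use P(2) in auto)
  then obtain y where y: "y \<in> S" "P y = y" by blast
  then have "picard_step F q \<delta> (apply_bcontfun y) = apply_bcontfun y" using P(1) by metis
  moreover have "range (apply_bcontfun y) \<subseteq> cball q r" using y(1) by (simp add: S_iff)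
  ultimately show ?thesis by blast
qed

end

lemma integral_curve_local_existence:
  fixes F :: "'a::banach \<Rightarrow> 'a"
  assumes F: "L-lipschitz_on (cball q r) F" and "0 < r"
  obtains \<delta> y where "0 < \<delta>" "y 0 = q" "y ` {0..\<delta>} \<subseteq> cball q r" "integral_curve_on F {0..\<delta>} y"
proof -
  have L: "0 \<le> L" using lipschitz_on_nonneg[OF F] .
  have F_cont: "continuous_on (cball q r) F" using F by (rule lipschitz_on_continuous_on)
  define M where "M = norm (F q) + L * r + 1"
  have M_pos: "0 < M" using L \<open>0 < r\<close> by (simp add: M_def add_nonneg_pos)
  have M: "norm (F z) \<le> M" if "z \<in> cball q r" for z
  proof -
    have "norm (F z - F q) \<le> L * norm (z - q)"
      using that \<open>0 < r\<close> by (intro lipschitz_on_normD[OF F]) auto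
    also have "\<dots> \<le> L * r"
      using that L by (intro mult_left_mono) (auto simp: dist_norm norm_minus_commute)
    finally show ?thesis
      using norm_triangle_ineq2[of "F z" "F q"] by (simp add: M_def)
  qed
  define \<delta> where "\<delta> = min (r / M) (1 / (2 * L + 2))"
  have \<delta>: "0 < \<delta>" "M * \<delta> \<le> r" "L * \<delta> \<le> 1 / 2"
  proof -
    show "0 < \<delta>" using M_pos L \<open>0 < r\<close> by (simp add: \<delta>_def)
    have "M * \<delta> \<le> M * (r / M)" using M_pos by (intro mult_left_mono) (auto simp: \<delta>_def)
    then show "M * \<delta> \<le> r" using M_pos by simp
    have "L * \<delta> \<le> L * (1 / (2 * L + 2))" using L by (intro mult_left_mono) (auto simp: \<delta>_def)
    also have "\<dots> \<le> 1 / 2" using L by (simp add: field_simps)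
    finally show "L * \<delta> \<le> 1 / 2" .
  qed
  obtain y where "continuous_on UNIV y" "range y \<subseteq> cball q r" "picard_step F q \<delta> y = y"
    using picard_fixpoint_exists[OF F_cont less_imp_le[OF \<delta>(1)] F less_imp_le[OF M_pos] M \<delta>(2,3)]
      \<open>0 < r\<close> by auto
  then show ?thesis
    using picard_step_fixpoint_is_integral_curve[OF F_cont less_imp_le[OF \<delta>(1)]] that[OF \<delta>(1)]
    by blast
qed

lemma continuation_on_interval:
  fixes P :: "real \<Rightarrow> bool"
  assumes "P a" and closed: "closed {t \<in> {a..b}. P t}"
    and step: "\<And>s. s \<in> {a..<b} \<Longrightarrow> \<forall>t\<in>{a..s}. P t \<Longrightarrow> \<exists>u\<in>{s<..b}. \<forall>t\<in>{s..u}. P t"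
    and t: "t \<in> {a..b}"
  shows "P t"
proof (rule ccontr)
  assume "\<not> P t"
  define Z where "Z = {t \<in> {a..b}. \<not> P t}"
  define s where "s = Inf Z"
  have "t \<in> Z" using t \<open>\<not> P t\<close> by (simp add: Z_def)
  have Z_bdd: "bdd_below Z" by (auto simp: Z_def intro: bdd_belowI[of _ a])
  have s_le: "s \<le> z" if "z \<in> Z" for z using cInf_lower[OF that Z_bdd] by (simp add: s_def)
  have "a \<le> s" unfolding s_def using \<open>t \<in> Z\<close> by (intro cInf_greatest) (auto simp: Z_def)
  have s_t: "s \<le> t" using s_le[OF \<open>t \<in> Z\<close>] .
  have below: "P t'" if "t' \<in> {a..<s}" for t'
    using that s_le t s_t by (force simp: Z_def)
  have "P s"
  proof (cases "s = a")
    case False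
    then have "{a..s} = closure {a..<s}" using \<open>a \<le> s\<close> by simp
    also have "\<dots> \<subseteq> closure {t \<in> {a..b}. P t}"
      using below s_t t by (intro closure_mono) auto
    finally have "s \<in> closure {t \<in> {a..b}. P t}" using \<open>a \<le> s\<close> by auto
    then show "P s" using closed by (simp add: closure_closed)
  qed (use \<open>P a\<close> in simp)
  then have "s < t" using s_t \<open>\<not> P t\<close> by (cases "s = t") auto
  then obtain u where u: "u \<in> {s<..b}" "\<forall>t'\<in>{s..u}. P t'"
    using step[of s] below \<open>P s\<close> \<open>a \<le> s\<close> t by force
  have "u \<le> z" if "z \<in> Z" for z
    using that u s_le[OF that] by (force simp: Z_def)
  then have "u \<le> s" unfolding s_def using \<open>t \<in> Z\<close> by (intro cInf_greatest) auto
  then show False using u(1) by simp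
qed

context
  fixes X C :: "'a::euclidean_space set" and F G :: "'a \<Rightarrow> 'a"
  assumes X: "open X" and F: "lipschitz_on_compacts X F" and G: "lipschitz_on_compacts X G"
    and C: "closedin (top_of_set X) C" and agree: "\<And>z. z \<in> C \<Longrightarrow> F z = G z"
    and G_inv: "forward_invariant X G C"
begin

lemma integral_curve_stays_in_invariant_set_locally:
  assumes x: "integral_curve_on F {s..b} x" "x ` {s..b} \<subseteq> X" and "s < b" "x s \<in> C"
  shows "\<exists>u\<in>{s<..b}. \<forall>t\<in>{s..u}. x t \<in> C"
proof -
  have "x s \<in> X" using x(2) \<open>s < b\<close> by auto
  then obtain r where r: "0 < r" "cball (x s) r \<subseteq> X"
    using X open_contains_cball by blast
  obtain L where "L-lipschitz_on (cball (x s) r) G"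
    by (rule lipschitz_on_compactsD[OF G compact_cball r(2)])
  then obtain \<delta> y
    where y: "0 < \<delta>" "y 0 = x s" "y ` {0..\<delta>} \<subseteq> cball (x s) r" "integral_curve_on G {0..\<delta>} y"
    using r(1) by (rule integral_curve_local_existence)
  have y_X: "y ` {0..\<delta>} \<subseteq> X" using y(3) r(2) by blast
  \<comment> \<open>The solution of \<open>G\<close> from \<open>x s\<close> stays in \<open>C\<close>, so it also solves \<open>F\<close> and must be \<open>x\<close>.\<close>
  have y_C: "y ` {0..\<delta>} \<subseteq> C"
    using forward_invariantD[OF G_inv _ _ y_X y(4)] y(1,2) \<open>x s \<in> C\<close> by simp
  have y_F: "integral_curve_on F {0..\<delta>} y"
  proof (rule integral_curve_on_cong[OF y(4)])
    fix t assume "t \<in> {0..\<delta>}"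
    then have "y t \<in> C" using y_C by blast
    then show "G (y t) = F (y t)" by (simp add: agree)
  qed
  define x' where "x' t = x (s + t)" for t
  have x': "integral_curve_on F {0..b - s} x'" "x' ` {0..b - s} \<subseteq> X"
    unfolding x'_def[abs_def] using integral_curve_on_shift[OF x(1)] x(2) by auto
  define h0 where "h0 = min \<delta> (b - s)"
  have h0: "0 < h0" "{0..h0} \<subseteq> {0..\<delta>}" "{0..h0} \<subseteq> {0..b - s}"
    using y(1) \<open>s < b\<close> by (auto simp: h0_def)
  have "x' ` {0..h0} \<subseteq> X" "y ` {0..h0} \<subseteq> X" "x' 0 = y 0"
    using h0 x'(2) y_X y(2) by (auto simp: x'_def)
  then obtain h where h: "0 < h" "h \<le> h0" and x'_y: "\<And>t. t \<in> {0..h} \<Longrightarrow> x' t = y t"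
    by (rule integral_curves_locally_unique[OF F h0(1) integral_curve_on_subset[OF x'(1) h0(3)] _
          integral_curve_on_subset[OF y_F h0(2)]]) blast
  have "x t \<in> C" if "t \<in> {s..s + h}" for t
  proof -
    have "t - s \<in> {0..h}" using that by auto
    then have "x t = y (t - s)" and "y (t - s) \<in> C"
      using x'_y[of "t - s"] y_C h(2) h0(2) by (auto simp: x'_def)
    then show ?thesis by simp
  qed
  then show ?thesis using h h0 by (intro bexI[of _ "s + h"]) (auto simp: h0_def)
qed

lemma forward_invariant_of_agreeing_field: "forward_invariant X F C"
  unfolding forward_invariant_def
proof clarify
  fix x T t
  assume T: "0 \<le> T" and "x 0 \<in> C" and t: "t \<in> {0..T}"
    and x: "\<forall>t\<in>{0..T}. x t \<in> X \<and> (x has_vector_derivative F (x t)) (at t within {0..T})"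
  then have x_curve: "integral_curve_on F {0..T} x" and x_X: "x ` {0..T} \<subseteq> X"
    by (auto simp: integral_curve_on_def)
  obtain C' where "closed C'" "C = X \<inter> C'" using C by (auto simp: closedin_closed)
  then have "{t \<in> {0..T}. x t \<in> C} = {0..T} \<inter> x -` C'" using x_X by auto
  then have "closed {t \<in> {0..T}. x t \<in> C}"
    using continuous_closed_preimage[OF integral_curve_on_continuous_on[OF x_curve] _ \<open>closed C'\<close>]
    by simp
  then show "x t \<in> C"
  proof (rule continuation_on_interval[where P = "\<lambda>t. x t \<in> C", OF \<open>x 0 \<in> C\<close> _ _ t])
    fix s assume "s \<in> {0..<T}" "\<forall>t\<in>{0..s}. x t \<in> C"
    then show "\<exists>u\<in>{s<..T}. \<forall>t\<in>{s..u}. x t \<in> C"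
      using x_curve x_X
      by (intro integral_curve_stays_in_invariant_set_locally)
        (auto elim!: integral_curve_on_subset)
  qed
qed

end

lemma has_vector_derivative_fst:
  "(\<phi> has_vector_derivative v) F \<Longrightarrow> ((\<lambda>t. fst (\<phi> t)) has_vector_derivative fst v) F"
  unfolding has_vector_derivative_def by (drule has_derivative_fst) simp

lemma has_vector_derivative_snd:
  "(\<phi> has_vector_derivative v) F \<Longrightarrow> ((\<lambda>t. snd (\<phi> t)) has_vector_derivative snd v) F"
  unfolding has_vector_derivative_def by (drule has_derivative_snd) simp

lemma forward_invariant_frozen_parameter:
  fixes G :: "'a::real_normed_vector \<times> 'b::real_normed_vector \<Rightarrow> 'a"
  assumes inv: "\<And>\<theta>. forward_invariant X (\<lambda>x. G (x, \<theta>)) C"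
  shows "forward_invariant (X \<times> UNIV) (\<lambda>z. (G z, 0)) (C \<times> UNIV)"
  unfolding forward_invariant_def
proof (intro allI impI ballI)
  fix \<phi> :: "real \<Rightarrow> 'a \<times> 'b" and T t
  assume "0 \<le> T \<and> \<phi> 0 \<in> C \<times> UNIV \<and>
    (\<forall>t\<in>{0..T}. \<phi> t \<in> X \<times> UNIV \<and> (\<phi> has_vector_derivative (G (\<phi> t), 0)) (at t within {0..T}))"
  then have T: "0 \<le> T" and "\<phi> 0 \<in> C \<times> UNIV"
    and \<phi>: "\<forall>t\<in>{0..T}. \<phi> t \<in> X \<times> UNIV \<and> (\<phi> has_vector_derivative (G (\<phi> t), 0)) (at t within {0..T})"
    by blast+
  assume t: "t \<in> {0..T}"
  have \<phi>': "(\<phi> has_vector_derivative (G (\<phi> t), 0)) (at t within {0..T})" if "t \<in> {0..T}" for t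
    using \<phi> that by blast
  obtain \<theta> where \<theta>: "\<And>t. t \<in> {0..T} \<Longrightarrow> snd (\<phi> t) = \<theta>"
    by (rule has_vector_derivative_zero_constant[of "{0..T}" "\<lambda>t. snd (\<phi> t)"])
      (use has_vector_derivative_snd[OF \<phi>'] in auto)
  have "integral_curve_on (\<lambda>x. G (x, \<theta>)) {0..T} (\<lambda>t. fst (\<phi> t))"
    unfolding integral_curve_on_def
  proof
    fix t assume t: "t \<in> {0..T}"
    have "G (\<phi> t) = G (fst (\<phi> t), \<theta>)" using \<theta>[OF t] by (metis prod.collapse)
    then show "((\<lambda>t. fst (\<phi> t)) has_vector_derivative G (fst (\<phi> t), \<theta>)) (at t within {0..T})"
      using has_vector_derivative_fst[OF \<phi>'[OF t]] by simp
  qed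
  moreover have "(\<lambda>t. fst (\<phi> t)) ` {0..T} \<subseteq> X" using \<phi> by (auto simp: mem_Times_iff)
  moreover have "fst (\<phi> 0) \<in> C" using \<open>\<phi> 0 \<in> C \<times> UNIV\<close> by (auto simp: mem_Times_iff)
  ultimately have "(\<lambda>t. fst (\<phi> t)) ` {0..T} \<subseteq> C"
    using forward_invariantD[OF inv T, of "\<lambda>t. fst (\<phi> t)"] by simp
  then show "\<phi> t \<in> C \<times> UNIV" using t by (auto simp: mem_Times_iff)
qed

lemma closedin_superlevel_set:
  fixes h :: "'a::topological_space \<Rightarrow> real"
  assumes "continuous_on X h"
  shows "closedin (top_of_set X) {x \<in> X. c \<le> h x}"
proof -
  have "{x \<in> X. c \<le> h x} = X \<inter> h -` {c..}" by auto
  then show ?thesis using continuous_closedin_preimage[OF assms closed_atLeast] by simp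
qed

lemma lipschitz_on_compacts_control_affine:
  fixes f :: "real^'n \<Rightarrow> real^'n" and g :: "real^'n \<Rightarrow> real^'m^'n" and k :: "real^'n \<Rightarrow> real^'m"
  assumes "open X" "C1_on X f" "C1_on X g" "lipschitz_on_compacts X k"
  shows "lipschitz_on_compacts X (\<lambda>x. f x + g x *v k x)"
  by (intro assms lipschitz_on_compacts_add C1_on_imp_lipschitz_on_compacts
      lipschitz_on_compacts_bilinear[OF bounded_bilinear_matrix_vector_mult])

lemma lipschitz_on_compacts_blend:
  fixes \<eta> :: "'a::euclidean_space \<Rightarrow> real" and kb :: "'a \<Rightarrow> 'c::real_normed_vector"
    and ke :: "'a \<times> 'b::euclidean_space \<Rightarrow> 'c"
  assumes X: "open X" and "C1_on X \<eta>" "C1_on X kb" "C1_on (X \<times> UNIV) ke"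
  shows "lipschitz_on_compacts X (\<lambda>x. (1 - \<eta> x) *\<^sub>R ke (x, \<theta>) + \<eta> x *\<^sub>R kb x)"
proof -
  note lip_C1 = C1_on_imp_lipschitz_on_compacts[OF X]
  note lip_scaleR = lipschitz_on_compacts_bilinear[OF bounded_bilinear_scaleR]
  have lip_ke: "lipschitz_on_compacts X (\<lambda>x. ke (x, \<theta>))"
    by (rule lipschitz_on_compacts_compose[OF C1_on_imp_lipschitz_on_compacts[OF
          open_Times[OF X open_UNIV] assms(4)] lipschitz_on_compacts_Pair_const]) auto
  show ?thesis
    by (intro lip_ke lipschitz_on_compacts_add lip_scaleR lipschitz_on_compacts_diff
        lipschitz_on_compacts_const lip_C1 assms(2,3))
qed

theorem lemma4:
  fixes X :: "(real^'n) set" and U :: "(real^'m) set"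
    and f :: "real^'n \<Rightarrow> real^'n" and g :: "real^'n \<Rightarrow> real^'m^'n"
    and h hb :: "real^'n \<Rightarrow> real" and kb :: "real^'n \<Rightarrow> real^'m"
    and ke :: "(real^'n) \<times> (real^'p) \<Rightarrow> real^'m" and \<eta> :: "real^'n \<Rightarrow> real"
  assumes X_open: "open X"
    and f_C1: "C1_on X f" and g_C1: "C1_on X g"
    and U_convex: "convex U" and U_polytope: "polytope U"
    and h_C1: "C1_on X h"
    and hb_C1: "C1_on X hb"
    and hb_grad: "\<forall>x \<in> X \<inter> frontier {x\<in>X. hb x \<ge> 0}. \<forall>D. (hb has_derivative D) (at x) \<longrightarrow> D \<noteq> (\<lambda>_. 0)"
    and CB_sub_CS: "{x\<in>X. hb x \<ge> 0} \<subseteq> {x\<in>X. h x \<ge> 0}"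
    and kb_C1: "C1_on X kb" and kb_U: "\<forall>x\<in>X. kb x \<in> U"
    and kb_inv: "forward_invariant X (\<lambda>x. f x + g x *v kb x) {x\<in>X. hb x \<ge> 0}"
    and ke_C1: "C1_on (X \<times> UNIV) ke" and ke_U: "\<forall>x\<in>X. \<forall>\<theta>. ke (x, \<theta>) \<in> U"
    and eta_C1: "C1_on X \<eta>" and eta_range: "\<forall>x\<in>X. 0 \<le> \<eta> x \<and> \<eta> x \<le> 1"
    and eta_one: "\<forall>x\<in>{x\<in>X. hb x \<ge> 0}. \<eta> x = 1"
  defines "fhat \<equiv> (\<lambda>xh :: (real^'n) \<times> (real^'p). (f (fst xh), (0 :: real^'p)))"
    and "ghat \<equiv> (\<lambda>(xh :: (real^'n) \<times> (real^'p)) (uh :: (real^'m) \<times> (real^'p)). (g (fst xh) *v fst uh, snd uh))"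
    and "kshat \<equiv> (\<lambda>xh :: (real^'n) \<times> (real^'p).
            ((1 - \<eta> (fst xh)) *\<^sub>R ke xh + \<eta> (fst xh) *\<^sub>R kb (fst xh), (0 :: real^'p)))"
    and "CBhat \<equiv> {xh \<in> X \<times> (UNIV :: (real^'p) set). hb (fst xh) \<ge> 0}"
  shows "forward_invariant (X \<times> (UNIV :: (real^'p) set)) (\<lambda>xh. fhat xh + ghat xh (kshat xh)) CBhat"
proof -
  define CB where "CB = {x\<in>X. hb x \<ge> 0}"
  define k where "k xh = (1 - \<eta> (fst xh)) *\<^sub>R ke xh + \<eta> (fst xh) *\<^sub>R kb (fst xh)" for xh
  have "forward_invariant X (\<lambda>x. f x + g x *v k (x, \<theta>)) CB" for \<theta>
  proof (rule forward_invariant_of_agreeing_field[OF X_open _ _ _ _ kb_inv[folded CB_def]])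
    show "lipschitz_on_compacts X (\<lambda>x. f x + g x *v k (x, \<theta>))"
      unfolding k_def fst_conv
      by (intro lipschitz_on_compacts_control_affine X_open f_C1 g_C1
          lipschitz_on_compacts_blend kb_C1 eta_C1 ke_C1)
    show "lipschitz_on_compacts X (\<lambda>x. f x + g x *v kb x)"
      by (intro lipschitz_on_compacts_control_affine X_open f_C1 g_C1
          C1_on_imp_lipschitz_on_compacts kb_C1)
    show "closedin (top_of_set X) CB"
      unfolding CB_def by (rule closedin_superlevel_set[OF C1_on_imp_continuous_on[OF hb_C1]])
    show "f x + g x *v k (x, \<theta>) = f x + g x *v kb x" if "x \<in> CB" for x
      using that eta_one by (simp add: CB_def k_def)
  qed
  then have "forward_invariant (X \<times> UNIV) (\<lambda>xh. (f (fst xh) + g (fst xh) *v k xh, 0)) (CB \<times> UNIV)"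
    using forward_invariant_frozen_parameter[where G = "\<lambda>xh. f (fst xh) + g (fst xh) *v k xh"]
    by simp
  moreover have "CBhat = CB \<times> UNIV" by (auto simp: CBhat_def CB_def)
  moreover have "fhat xh + ghat xh (kshat xh) = (f (fst xh) + g (fst xh) *v k xh, 0)" for xh
    by (simp add: fhat_def ghat_def kshat_def k_def case_prod_beta)
  ultimately show ?thesis by simp
qed

end
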